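(* Let $f:\mathbb{R}^M\times\mathbb{R}^m\to\mathbb{R}^N$ be twice differentiable in $\boldsymbol{\theta}\in\mathbb{R}^m$, let $(\mathbf{x}_i,\mathbf{y}_i)_{i=1}^n$ be training data, and let $\varepsilon>0$, $M_0>0$. Suppose $\|f(\mathbf{x}_i,\boldsymbol{\theta})-\mathbf{y}_i\|_2<\varepsilon$ for all $i$, and $|\theta_j|^2\,\|\partial^2 f(\mathbf{x}_i,\boldsymbol{\theta})/\partial\theta_j^2\|_2<M_0$ for all $i$ and all $j\in\{1,\dots,m\}$. Then $$S_{\mathrm{adaptive}}(\boldsymbol{\theta})=\frac1n\sum_{i=1}^n\sum_{j=1}^m|\theta_j|^2\,\Big\|\frac{\partial f(\mathbf{x}_i,\boldsymbol{\theta})}{\partial\theta_j}\Big\|_2^2+O(\varepsilon),$$ where the implied constant depends only on $m$ and $M_0$.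
   Context: The loss is the MSE loss $L(\boldsymbol{\theta})=\frac1n\sum_{i=1}^n\frac12\|f(\mathbf{x}_i,\boldsymbol{\theta})-\mathbf{y}_i\|_2^2$. The elementwise-adaptive sharpness is $S_{\mathrm{adaptive}}(\boldsymbol{\theta})=\operatorname{Tr}\big(\nabla^2_{\boldsymbol{\theta}}L(\boldsymbol{\theta})\odot|\boldsymbol{\theta}||\boldsymbol{\theta}|^{T}\big)$, where $|\boldsymbol{\theta}|$ is the entrywise absolute value of the parameter vector and $\odot$ is the entrywise (Hadamard) product; equivalently $S_{\mathrm{adaptive}}(\boldsymbol{\theta})=\sum_{j=1}^m|\theta_j|^2\,\partial^2L/\partial\theta_j^2$. *)

theory Defs
  imports "HOL-Analysis.Analysis"
begin

definition partial_deriv ::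
  "(real^'m \<Rightarrow> 'b::real_normed_vector) \<Rightarrow> 'm \<Rightarrow> real^'m \<Rightarrow> 'b" where
  "partial_deriv g j \<theta> = frechet_derivative g (at \<theta>) (axis j 1)"

text \<open>Twice (Frechet) differentiable on the whole parameter space: g is differentiable
  everywhere and every first partial derivative is differentiable everywhere
  (in finite dimension this is differentiability of the derivative map).\<close>
definition twice_differentiable :: "(real^'m \<Rightarrow> 'b::real_normed_vector) \<Rightarrow> bool" where
  "twice_differentiable g \<longleftrightarrow>
     (\<forall>\<theta>. g differentiable (at \<theta>)) \<and>
     (\<forall>j \<theta>. (\<lambda>t. partial_deriv g j t) differentiable (at \<theta>))"

definition hessian :: "(real^'m \<Rightarrow> real) \<Rightarrow> real^'m \<Rightarrow> 'm \<Rightarrow> 'm \<Rightarrow> real" where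
  "hessian L \<theta> k j = partial_deriv (\<lambda>t. partial_deriv L j t) k \<theta>"

definition mse_loss ::
  "('a \<Rightarrow> real^'m \<Rightarrow> real^'N) \<Rightarrow> nat \<Rightarrow> (nat \<Rightarrow> 'a) \<Rightarrow> (nat \<Rightarrow> real^'N) \<Rightarrow> real^'m \<Rightarrow> real" where
  "mse_loss f n x y \<theta> = (1 / real n) * (\<Sum>i=1..n. (1/2) * (norm (f (x i) \<theta> - y i))\<^sup>2)"

text \<open>Elementwise-adaptive sharpness Tr(Hess L \<odot> |theta||theta|^T).\<close>
definition S_adaptive :: "(real^'m \<Rightarrow> real) \<Rightarrow> real^'m \<Rightarrow> real" where
  "S_adaptive L \<theta> = (\<Sum>j\<in>UNIV. hessian L \<theta> j j * (\<bar>\<theta> $ j\<bar> * \<bar>\<theta> $ j\<bar>))"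

end

theory Submission
  imports Defs
begin

text \<open>The diagonal Hessian entry of the loss of one sample, \<open>\<partial>\<^sub>j\<^sub>j (\<parallel>f - y\<parallel>\<^sup>2/2)\<close>, is the
  Gauss--Newton term \<open>\<parallel>\<partial>\<^sub>j f\<parallel>\<^sup>2\<close> plus the residual paired with \<open>\<partial>\<^sub>j\<^sub>j f\<close>. Weighted by
  \<open>\<theta>\<^sub>j\<^sup>2\<close>, the second summand is at most \<open>\<epsilon> M0\<close> in absolute value by Cauchy--Schwarz;
  averaging over the samples and summing over the \<open>m\<close> coordinates bounds the deviation of
  the adaptive sharpness from the Gauss--Newton sum by \<open>m M0 \<epsilon>\<close>.\<close>

lemma partial_deriv_eqI:
  assumes "(g has_derivative g') (at t)"
  shows "partial_deriv g j t = g' (axis j 1)"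
  using frechet_derivative_at[OF assms] by (simp add: partial_deriv_def)

lemma partial_deriv_diff_const:
  assumes "g differentiable (at t)"
  shows "partial_deriv (\<lambda>t. g t - c) j t = partial_deriv g j t"
proof -
  have "((\<lambda>t. g t - c) has_derivative (\<lambda>h. frechet_derivative g (at t) h - 0)) (at t)"
    using assms
    by (intro has_derivative_diff has_derivative_const) (simp add: frechet_derivative_works)
  from partial_deriv_eqI[OF this] show ?thesis by (simp add: partial_deriv_def)
qed

lemma partial_deriv_inner:
  fixes u v :: "real^'m \<Rightarrow> 'b::real_inner"
  assumes "u differentiable (at t)" and "v differentiable (at t)"
  shows "partial_deriv (\<lambda>t. u t \<bullet> v t) j t
           = partial_deriv u j t \<bullet> v t + u t \<bullet> partial_deriv v j t"
proof -
  have "((\<lambda>t. u t \<bullet> v t) has_derivative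
      (\<lambda>h. u t \<bullet> frechet_derivative v (at t) h + frechet_derivative u (at t) h \<bullet> v t)) (at t)"
    using assms by (intro has_derivative_inner) (simp_all add: frechet_derivative_works)
  from partial_deriv_eqI[OF this] show ?thesis by (simp add: partial_deriv_def add.commute)
qed

lemma partial_deriv_scaled_sum:
  fixes g :: "'i \<Rightarrow> real^'m \<Rightarrow> real"
  assumes "finite I" and "\<And>i. i \<in> I \<Longrightarrow> g i differentiable (at t)"
  shows "partial_deriv (\<lambda>t. c * (\<Sum>i\<in>I. g i t)) j t = c * (\<Sum>i\<in>I. partial_deriv (g i) j t)"
proof -
  have "((\<lambda>t. c * (\<Sum>i\<in>I. g i t)) has_derivative
      (\<lambda>h. c * (\<Sum>i\<in>I. frechet_derivative (g i) (at t) h))) (at t)"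
    using assms
    by (intro has_derivative_mult_right has_derivative_sum) (simp_all add: frechet_derivative_works)
  from partial_deriv_eqI[OF this] show ?thesis by (simp add: partial_deriv_def)
qed

lemma has_derivative_half_sq_dist:
  fixes g :: "'a::real_normed_vector \<Rightarrow> 'b::real_inner"
  assumes "(g has_derivative g') (at t)"
  shows "((\<lambda>t. (1/2) * (norm (g t - c))\<^sup>2) has_derivative (\<lambda>h. (g t - c) \<bullet> g' h)) (at t)"
proof -
  have "(\<lambda>t. (1/2) * (norm (g t - c))\<^sup>2) = (\<lambda>t. (1/2) * ((g t - c) \<bullet> (g t - c)))"
    by (simp add: power2_norm_eq_inner)
  moreover have "((\<lambda>t. (1/2) * ((g t - c) \<bullet> (g t - c))) has_derivative
      (\<lambda>h. (1/2) * ((g t - c) \<bullet> g' h + g' h \<bullet> (g t - c)))) (at t)"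
    using assms by (auto intro!: derivative_eq_intros)
  ultimately show ?thesis by (simp add: inner_commute)
qed

lemma partial_deriv_half_sq_dist:
  fixes g :: "real^'m \<Rightarrow> 'b::real_inner"
  assumes "g differentiable (at t)"
  shows "partial_deriv (\<lambda>t. (1/2) * (norm (g t - c))\<^sup>2) j t = (g t - c) \<bullet> partial_deriv g j t"
  using partial_deriv_eqI[OF has_derivative_half_sq_dist] assms
  by (simp add: frechet_derivative_works partial_deriv_def)

lemma differentiable_half_sq_dist:
  fixes g :: "'a::real_normed_vector \<Rightarrow> 'b::real_inner"
  assumes "g differentiable (at t)"
  shows "(\<lambda>t. (1/2) * (norm (g t - c))\<^sup>2) differentiable (at t)"
  using assms has_derivative_half_sq_dist unfolding differentiable_def by blast

lemma partial_deriv_mse_loss: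
  fixes f :: "'a \<Rightarrow> real^'m \<Rightarrow> real^'N"
  assumes "\<And>i. f (x i) differentiable (at t)"
  shows "partial_deriv (mse_loss f n x y) j t
           = (1/real n) * (\<Sum>i=1..n. (f (x i) t - y i) \<bullet> partial_deriv (f (x i)) j t)"
proof -
  have "\<And>i. partial_deriv (\<lambda>t. (1/2) * (norm (f (x i) t - y i))\<^sup>2) j t
      = (f (x i) t - y i) \<bullet> partial_deriv (f (x i)) j t"
    and "\<And>i. (\<lambda>t. (1/2) * (norm (f (x i) t - y i))\<^sup>2) differentiable (at t)"
    by (rule partial_deriv_half_sq_dist differentiable_half_sq_dist assms)+
  then show ?thesis
    unfolding mse_loss_def[abs_def] by (simp only: partial_deriv_scaled_sum finite_atLeastAtMost)
qed

lemma hessian_mse_loss: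
  fixes f :: "'a \<Rightarrow> real^'m \<Rightarrow> real^'N"
  assumes "\<And>xx. twice_differentiable (f xx)"
  shows "hessian (mse_loss f n x y) \<theta> k j = (1/real n) * (\<Sum>i=1..n.
           partial_deriv (f (x i)) k \<theta> \<bullet> partial_deriv (f (x i)) j \<theta>
           + (f (x i) \<theta> - y i) \<bullet> partial_deriv (\<lambda>t. partial_deriv (f (x i)) j t) k \<theta>)"
proof -
  have diff: "\<And>i t. f (x i) differentiable (at t)"
    and diff_partial: "\<And>i t. (\<lambda>t. partial_deriv (f (x i)) j t) differentiable (at t)"
    using assms by (auto simp: twice_differentiable_def)
  have partial_loss: "partial_deriv (mse_loss f n x y) j
      = (\<lambda>t. (1/real n) * (\<Sum>i=1..n. (f (x i) t - y i) \<bullet> partial_deriv (f (x i)) j t))"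
    by (intro ext partial_deriv_mse_loss diff)
  show ?thesis
    unfolding hessian_def partial_loss
    by (subst partial_deriv_scaled_sum)
      (simp_all add: partial_deriv_inner partial_deriv_diff_const diff diff_partial)
qed

lemma S_adaptive_mse_loss:
  fixes f :: "'a \<Rightarrow> real^'m \<Rightarrow> real^'N"
  assumes "\<And>xx. twice_differentiable (f xx)"
  shows "S_adaptive (mse_loss f n x y) \<theta>
    = (1/real n) * (\<Sum>i=1..n. \<Sum>j\<in>UNIV. \<bar>\<theta> $ j\<bar>\<^sup>2 * (norm (partial_deriv (f (x i)) j \<theta>))\<^sup>2)
    + (1/real n) * (\<Sum>i=1..n. \<Sum>j\<in>UNIV. \<bar>\<theta> $ j\<bar>\<^sup>2
         * ((f (x i) \<theta> - y i) \<bullet> partial_deriv (\<lambda>t. partial_deriv (f (x i)) j t) j \<theta>))"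
proof -
  let ?G = "\<lambda>i j. \<bar>\<theta> $ j\<bar>\<^sup>2 * (norm (partial_deriv (f (x i)) j \<theta>))\<^sup>2"
  let ?E = "\<lambda>i j. \<bar>\<theta> $ j\<bar>\<^sup>2
              * ((f (x i) \<theta> - y i) \<bullet> partial_deriv (\<lambda>t. partial_deriv (f (x i)) j t) j \<theta>)"
  have "S_adaptive (mse_loss f n x y) \<theta> = (\<Sum>j\<in>UNIV. (1/real n) * (\<Sum>i=1..n. ?G i j + ?E i j))"
    unfolding S_adaptive_def hessian_mse_loss[OF assms]
    by (simp add: dot_square_norm power2_eq_square sum_distrib_left algebra_simps)
  also have "\<dots> = (1/real n) * (\<Sum>i=1..n. \<Sum>j\<in>UNIV. ?G i j) + (1/real n) * (\<Sum>i=1..n. \<Sum>j\<in>UNIV. ?E i j)"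
    by (simp only: sum.distrib distrib_left sum_distrib_left sum.swap[of _ "{1..n}"])
  finally show ?thesis .
qed

lemma abs_mean_le:
  fixes a :: "nat \<Rightarrow> real"
  assumes "\<And>i. i \<in> {1..n} \<Longrightarrow> \<bar>a i\<bar> \<le> B" and "0 \<le> B"
  shows "\<bar>(1/real n) * (\<Sum>i=1..n. a i)\<bar> \<le> B"
proof (cases "n = 0")
  case False
  have "\<bar>\<Sum>i=1..n. a i\<bar> \<le> (\<Sum>i=1..n. B)"
    by (intro order_trans[OF sum_abs] sum_mono assms(1))
  with False show ?thesis by (simp add: abs_mult field_simps)
qed (use assms in simp)

lemma abs_weighted_inner_le:
  fixes u v :: "'a::real_inner"
  assumes "0 \<le> w" and "norm u \<le> a" and "w * norm v \<le> b"
  shows "\<bar>w * (u \<bullet> v)\<bar> \<le> a * b"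
proof -
  have "\<bar>w * (u \<bullet> v)\<bar> \<le> w * (norm u * norm v)"
    using assms(1) by (simp add: abs_mult Cauchy_Schwarz_ineq2 mult_left_mono)
  also have "\<dots> = norm u * (w * norm v)" by simp
  also have "\<dots> \<le> a * b"
    using assms order_trans[OF norm_ge_zero assms(2)] by (intro mult_mono) auto
  finally show ?thesis .
qed

theorem lemma4:
  fixes f :: "real^'M \<Rightarrow> real^'m \<Rightarrow> real^'N"
    and x :: "nat \<Rightarrow> real^'M" and y :: "nat \<Rightarrow> real^'N"
    and n :: nat and \<theta> :: "real^'m" and \<epsilon> M0 :: real
  assumes "\<And>xx. twice_differentiable (f xx)"
    and "\<epsilon> > 0" and "M0 > 0"
    and "\<And>i. i \<in> {1..n} \<Longrightarrow> norm (f (x i) \<theta> - y i) < \<epsilon>"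
    and "\<And>i j. i \<in> {1..n} \<Longrightarrow>
           \<bar>\<theta> $ j\<bar>\<^sup>2 * norm (partial_deriv (\<lambda>t. partial_deriv (f (x i)) j t) j \<theta>) < M0"
  shows "\<bar>S_adaptive (mse_loss f n x y) \<theta>
          - (1 / real n) * (\<Sum>i=1..n. \<Sum>j\<in>UNIV. \<bar>\<theta> $ j\<bar>\<^sup>2 * (norm (partial_deriv (f (x i)) j \<theta>))\<^sup>2)\<bar>
         \<le> real CARD('m) * M0 * \<epsilon>"
proof -
  let ?R = "\<lambda>i. \<Sum>j\<in>UNIV. \<bar>\<theta> $ j\<bar>\<^sup>2
              * ((f (x i) \<theta> - y i) \<bullet> partial_deriv (\<lambda>t. partial_deriv (f (x i)) j t) j \<theta>)"
  have "\<bar>?R i\<bar> \<le> real CARD('m) * M0 * \<epsilon>" if "i \<in> {1..n}" for i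
  proof -
    have "\<bar>?R i\<bar> \<le> (\<Sum>j\<in>(UNIV::'m set). \<epsilon> * M0)"
      using assms(4,5)[OF that]
      by (intro order_trans[OF sum_abs] sum_mono abs_weighted_inner_le) (auto intro: less_imp_le)
    then show ?thesis by (simp add: mult_ac)
  qed
  then have "\<bar>(1/real n) * (\<Sum>i=1..n. ?R i)\<bar> \<le> real CARD('m) * M0 * \<epsilon>"
    using assms(2,3) by (intro abs_mean_le) auto
  then show ?thesis
    unfolding S_adaptive_mse_loss[OF assms(1)] by simp
qed

end
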